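(* For every integer $N\ge 0$, let $T_{1\times 4}(8,N)$ be the number of tilings of an $8\times n$ rectangle, $n=N/2$, by $N$ tiles of size $1\times 4$ (and $0$ if $N$ is odd). Then, as formal power series, $\sum_{N\ge 0} T_{1\times 4}(8,N)\,z^N=p(z)/q(z)$ where \[ p(z)=(1-z^2)^3(1+z^2)^3(1+z^4)^3(1-z^4-z^6-z^8+z^{12}), \] \[ q(z)=1-z^2-z^4-9z^8+2z^{10}+8z^{12}+5z^{14}+16z^{16}-13z^{20}-6z^{22}-13z^{24}-2z^{26}+10z^{28}+6z^{30}+6z^{32}+z^{34}-5z^{36}-2z^{38}-z^{40}+z^{44}. \]
   Context: A tiling of an $m\times n$ rectangle (width $m$, length $n$, made of $mn$ unit squares) by $a\times b$ tiles is a partition of the rectangle into non-overlapping axis-parallel $a\times b$ rectangles with integer corner coordinates, each placed in either of its two orientations. Tilings related by reflections or rotations of the rectangle are counted as distinct. The empty tiling counts once for $N=0$. *)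

theory Defs
  imports "HOL-Computational_Algebra.Formal_Power_Series"
begin

definition rect :: "nat \<Rightarrow> nat \<Rightarrow> nat \<Rightarrow> nat \<Rightarrow> (nat \<times> nat) set" where
  "rect x y w h = {x..<x+w} \<times> {y..<y+h}"

definition is_tile :: "nat \<Rightarrow> nat \<Rightarrow> (nat \<times> nat) set \<Rightarrow> bool" where
  "is_tile a b S \<longleftrightarrow> (\<exists>x y. S = rect x y a b \<or> S = rect x y b a)"

definition is_tiling :: "nat \<Rightarrow> nat \<Rightarrow> nat \<Rightarrow> nat \<Rightarrow> (nat \<times> nat) set set \<Rightarrow> bool" where
  "is_tiling a b m n T \<longleftrightarrow>
     (\<forall>S\<in>T. is_tile a b S) \<and>
     (\<forall>S\<in>T. \<forall>S'\<in>T. S \<noteq> S' \<longrightarrow> S \<inter> S' = {}) \<and>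
     \<Union>T = {0..<m} \<times> {0..<n}"

definition T14_8 :: "nat \<Rightarrow> nat" where
  "T14_8 N = (if even N then card {T. is_tiling 1 4 8 (N div 2) T \<and> card T = N} else 0)"

end

(*
  Tilings of the 8 x n rectangle by 1 x 4 bars are counted row by row.  The first uncovered cell
  in row-major order must be the corner of a vertical or of a horizontal bar; recording for each
  column how far above the current row it is already covered (its profile) turns the count into
  a transfer recursion on profiles, and in a strip of width 8 only 52 profiles occur.  A linear
  recurrence that holds for 23 consecutive state vectors is propagated by the (linear) transfer to
  all later rows, so the generating function in the number n of rows is P(Y)/Q(Y) with explicit
  polynomials; substituting Y = z^2 (a tiling of 8 x n has N = 2n tiles) gives the claim.
*)
theory Submission
  imports Defs "HOL-Computational_Algebra.Polynomial_FPS"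
begin

unbundle fps_syntax

section \<open>Tilings of a set of cells\<close>

definition tilings :: "nat \<Rightarrow> nat \<Rightarrow> (nat \<times> nat) set \<Rightarrow> (nat \<times> nat) set set set" where
  "tilings a b R = {T. (\<forall>S\<in>T. is_tile a b S) \<and>
     (\<forall>S\<in>T. \<forall>S'\<in>T. S \<noteq> S' \<longrightarrow> S \<inter> S' = {}) \<and> \<Union>T = R}"

lemma is_tiling_iff_tilings: "is_tiling a b m n T \<longleftrightarrow> T \<in> tilings a b ({0..<m} \<times> {0..<n})"
  unfolding is_tiling_def tilings_def by simp

lemma card_tile: "is_tile a b S \<Longrightarrow> card S = a * b"
  unfolding is_tile_def rect_def by (auto simp: card_cartesian_product)

lemma tile_nonempty: "is_tile a b S \<Longrightarrow> 0 < a \<Longrightarrow> 0 < b \<Longrightarrow> S \<noteq> {}"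
  using card_tile by fastforce

lemma tilings_empty:
  assumes "0 < a" "0 < b"
  shows "tilings a b {} = {{}}"
  unfolding tilings_def using tile_nonempty[OF _ assms] by fastforce

lemma finite_tilings: "finite R \<Longrightarrow> finite (tilings a b R)"
  by (rule finite_subset[of _ "Pow (Pow R)"]) (auto simp: tilings_def)

lemma card_tiled_region:
  assumes "T \<in> tilings a b R" "finite R"
  shows "card R = a * b * card T"
proof -
  have T: "\<forall>S\<in>T. is_tile a b S" "pairwise disjnt T" "\<Union>T = R"
    using assms(1) unfolding tilings_def pairwise_def disjnt_def by auto
  have "finite T" "\<forall>S\<in>T. finite S"
    using assms(2) T(3) finite_UnionD by (blast, metis Union_upper finite_subset)
  then have "card R = (\<Sum>S\<in>T. card S)"
    using card_Union_disjoint[OF T(2)] T(3) by simp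
  also have "\<dots> = (\<Sum>S\<in>T. a * b)"
    using T(1) card_tile by (intro sum.cong) auto
  also have "\<dots> = a * b * card T"
    by simp
  finally show ?thesis .
qed

definition first_cell :: "nat \<times> nat \<Rightarrow> (nat \<times> nat) set \<Rightarrow> bool" where
  "first_cell c R \<longleftrightarrow> c \<in> R \<and> (\<forall>(x, y)\<in>R. snd c < y \<or> (y = snd c \<and> fst c \<le> x))"

lemma tile_at_first_cell:
  assumes "is_tile a b S" "S \<subseteq> R" "(cx, cy) \<in> S" "first_cell (cx, cy) R"
  shows "S = rect cx cy a b \<or> S = rect cx cy b a"
proof -
  obtain x y where S: "S = rect x y a b \<or> S = rect x y b a"
    using assms(1) unfolding is_tile_def by blast
  have "x \<le> cx" "y \<le> cy" "(x, y) \<in> S"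
    using assms(3) S unfolding rect_def by auto
  then have "x = cx \<and> y = cy"
    using assms(2,4) unfolding first_cell_def by fastforce
  then show ?thesis
    using S by blast
qed

lemma tilings_containing_tile:
  assumes "V \<subseteq> R" "is_tile a b V"
  shows "tilings a b R \<inter> {T. V \<in> T} = insert V ` tilings a b (R - V)"
proof (intro equalityI subsetI)
  fix T assume T: "T \<in> tilings a b R \<inter> {T. V \<in> T}"
  then have "T - {V} \<in> tilings a b (R - V)" and "T = insert V (T - {V})"
    unfolding tilings_def by blast+
  then show "T \<in> insert V ` tilings a b (R - V)" by blast
next
  fix T assume "T \<in> insert V ` tilings a b (R - V)"
  then obtain T' where T': "T' \<in> tilings a b (R - V)" "T = insert V T'" by blast
  then have "\<forall>S\<in>T'. S \<inter> V = {}"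
    unfolding tilings_def by blast
  then show "T \<in> tilings a b R \<inter> {T. V \<in> T}"
    using T' assms unfolding tilings_def by auto
qed

lemma card_tilings_containing_tile:
  assumes "is_tile a b V" "0 < a" "0 < b"
  shows "card (tilings a b R \<inter> {T. V \<in> T}) = (if V \<subseteq> R then card (tilings a b (R - V)) else 0)"
proof (cases "V \<subseteq> R")
  case True
  have "V \<notin> T" if "T \<in> tilings a b (R - V)" for T
    using that tile_nonempty[OF assms] unfolding tilings_def by blast
  then have "inj_on (insert V) (tilings a b (R - V))"
    by (meson inj_onI insert_ident)
  then show ?thesis
    using True tilings_containing_tile[OF True assms(1)] by (simp add: card_image)
next
  case False
  then have "tilings a b R \<inter> {T. V \<in> T} = {}"
    unfolding tilings_def by blast
  then show ?thesis
    using False by simp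
qed

text \<open>The tile covering the first cell of \<open>R\<close> in row-major order has that cell as its
  corner, so only the two orientations need to be tried.\<close>
lemma card_tilings_first_cell:
  assumes "finite R" "first_cell (cx, cy) R" "0 < a" "0 < b" "a \<noteq> b"
  shows "card (tilings a b R) =
    (if rect cx cy a b \<subseteq> R then card (tilings a b (R - rect cx cy a b)) else 0) +
    (if rect cx cy b a \<subseteq> R then card (tilings a b (R - rect cx cy b a)) else 0)"
proof -
  define V H where "V = rect cx cy a b" and "H = rect cx cy b a"
  have tiles: "is_tile a b V" "is_tile a b H"
    unfolding V_def H_def is_tile_def by auto
  have corner: "(cx, cy) \<in> V" "(cx, cy) \<in> H"
    using assms(3,4) unfolding V_def H_def rect_def by auto
  have "{cx..<cx + a} \<noteq> {cx..<cx + b}"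
    using assms(5) by (metis card_atLeastLessThan add_diff_cancel_left')
  then have "V \<noteq> H"
    using assms(3,4) unfolding V_def H_def rect_def by (auto simp: times_eq_iff)
  let ?TV = "tilings a b R \<inter> {T. V \<in> T}" and ?TH = "tilings a b R \<inter> {T. H \<in> T}"
  have "tilings a b R = ?TV \<union> ?TH"
  proof (intro equalityI subsetI)
    fix T assume T: "T \<in> tilings a b R"
    then obtain S where "S \<in> T" "(cx, cy) \<in> S" "S \<subseteq> R" "is_tile a b S"
      using assms(2) unfolding tilings_def first_cell_def by blast
    then show "T \<in> ?TV \<union> ?TH"
      using T tile_at_first_cell[OF _ _ _ assms(2)] unfolding V_def H_def by blast
  qed auto
  moreover have "?TV \<inter> ?TH = {}"
    using \<open>V \<noteq> H\<close> corner unfolding tilings_def by blast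
  moreover have "finite ?TV" "finite ?TH"
    using finite_tilings[OF assms(1)] by auto
  ultimately have "card (tilings a b R) = card ?TV + card ?TH"
    using card_Un_disjoint by (metis (no_types, lifting))
  then show ?thesis
    using card_tilings_containing_tile[OF tiles(1) assms(3,4)]
      card_tilings_containing_tile[OF tiles(2) assms(3,4)]
    unfolding V_def H_def by simp
qed

section \<open>Tilings by bars of a region above a profile\<close>

lemma rect_subset_iff: "rect x y a b \<subseteq> R \<longleftrightarrow> (\<forall>i<a. \<forall>j<b. (x + i, y + j) \<in> R)"
proof
  assume R: "\<forall>i<a. \<forall>j<b. (x + i, y + j) \<in> R"
  have "(u, v) \<in> R" if "(u, v) \<in> rect x y a b" for u v
  proof -
    have "u - x < a" "v - y < b" "x \<le> u" "y \<le> v"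
      using that unfolding rect_def by auto
    then have "(x + (u - x), y + (v - y)) \<in> R"
      using R by blast
    then show ?thesis
      using \<open>x \<le> u\<close> \<open>y \<le> v\<close> by simp
  qed
  then show "rect x y a b \<subseteq> R"
    by auto
qed (auto simp: rect_def)

lemma take_eq_replicate_iff:
  "take n xs = replicate n x \<longleftrightarrow> (\<forall>j<n. j < length xs \<and> xs ! j = x)"
proof
  assume "take n xs = replicate n x"
  then show "\<forall>j<n. j < length xs \<and> xs ! j = x"
    by (metis length_replicate nat_le_linear nth_replicate nth_take order.strict_trans2 take_all)
next
  assume H: "\<forall>j<n. j < length xs \<and> xs ! j = x"
  then have "n \<le> length xs"
    by (cases n) auto
  then show "take n xs = replicate n x"
    using H by (intro nth_equalityI) auto
qed

definition profile_region :: "nat \<Rightarrow> nat list \<Rightarrow> nat \<Rightarrow> (nat \<times> nat) set" where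
  "profile_region y0 h m = {(x, y). x < length h \<and> y0 + h ! x \<le> y \<and> y < m}"

lemma mem_profile_region [simp]:
  "(x, y) \<in> profile_region y0 h m \<longleftrightarrow> x < length h \<and> y0 + h ! x \<le> y \<and> y < m"
  by (simp add: profile_region_def)

lemma finite_profile_region: "finite (profile_region y0 h m)"
  by (rule finite_subset[of _ "{..<length h} \<times> {..<m}"]) auto

lemma rect_eq_profile_region: "{0..<w} \<times> {0..<n} = profile_region 0 (replicate w 0) n"
  by auto

lemma first_cell_profile_region:
  assumes "0 \<notin> set pre" "y0 < m"
  shows "first_cell (length pre, y0) (profile_region y0 (pre @ 0 # h) m)"
proof -
  have "length pre \<le> x" if "(pre @ 0 # h) ! x = 0" for x
    using that assms(1) nth_mem[of x pre] by (cases "x < length pre") (auto simp: nth_append)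
  then show ?thesis
    using assms(2) unfolding first_cell_def by fastforce
qed

lemma vertical_bar_subset_profile_region:
  assumes "0 < k"
  shows "rect (length pre) y0 1 k \<subseteq> profile_region y0 (pre @ 0 # h) m \<longleftrightarrow> y0 + k \<le> m"
proof -
  have "rect (length pre) y0 1 k \<subseteq> profile_region y0 (pre @ 0 # h) m \<longleftrightarrow> (\<forall>j<k. y0 + j < m)"
    by (simp add: rect_subset_iff nth_append)
  then show ?thesis
    using assms by presburger
qed

lemma profile_region_minus_vertical_bar:
  "profile_region y0 (pre @ 0 # h) m - rect (length pre) y0 1 k = profile_region y0 (pre @ k # h) m"
  unfolding rect_def by (auto simp: nth_append nth_Cons' split: if_splits)

lemma horizontal_bar_subset_profile_region:
  assumes "0 < k" "y0 < m"
  shows "rect (length pre) y0 k 1 \<subseteq> profile_region y0 (pre @ 0 # h) m \<longleftrightarrow>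
    take (k - 1) h = replicate (k - 1) 0"
proof -
  have "rect (length pre) y0 k 1 \<subseteq> profile_region y0 (pre @ 0 # h) m \<longleftrightarrow>
      (\<forall>j<k. j < Suc (length h) \<and> (0 # h) ! j = 0)"
    using assms(2) by (simp add: rect_subset_iff nth_append)
  also have "\<dots> \<longleftrightarrow> (\<forall>j<k - 1. j < length h \<and> h ! j = 0)"
    using assms(1) by (cases k) (auto simp: All_less_Suc2)
  finally show ?thesis
    by (simp add: take_eq_replicate_iff)
qed

lemma profile_region_minus_horizontal_bar:
  "profile_region y0 (pre @ replicate k 0 @ h) m - rect (length pre) y0 k 1 =
    profile_region y0 (pre @ replicate k 1 @ h) m"
  unfolding rect_def by (auto simp: nth_append split: if_splits)

text \<open>The ways of covering the empty cells (entries \<open>0\<close>) in the lowest row of a profile by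
  \<open>1 \<times> k\<close> bars, from left to right: a vertical bar raises its column by \<open>k\<close>, a horizontal
  bar raises \<open>k\<close> consecutive columns by \<open>1\<close>.\<close>
fun fill_row :: "nat \<Rightarrow> bool \<Rightarrow> nat list \<Rightarrow> nat list list" where
  "fill_row k vert [] = [[]]"
| "fill_row k vert (v # h) =
     (if v \<noteq> 0 then map (Cons v) (fill_row k vert h)
      else (if vert then map (Cons k) (fill_row k vert h) else []) @
           (if take (k - 1) h = replicate (k - 1) 0
            then map ((@) (replicate k 1)) (fill_row k vert (drop (k - 1) h)) else []))"

lemma fill_row_nonzero: "0 < k \<Longrightarrow> h' \<in> set (fill_row k vert h) \<Longrightarrow> 0 \<notin> set h'"
  by (induction k vert h arbitrary: h' rule: fill_row.induct) (auto split: if_splits)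

lemma card_tilings_profile_region_step:
  assumes "1 < k" "0 \<notin> set pre" "y0 < m"
  shows "card (tilings 1 k (profile_region y0 (pre @ 0 # h) m)) =
    (if y0 + k \<le> m then card (tilings 1 k (profile_region y0 (pre @ k # h) m)) else 0) +
    (if take (k - 1) h = replicate (k - 1) 0
     then card (tilings 1 k (profile_region y0 (pre @ replicate k 1 @ drop (k - 1) h) m)) else 0)"
proof -
  let ?R = "profile_region y0 (pre @ 0 # h) m"
  let ?V = "rect (length pre) y0 1 k" and ?H = "rect (length pre) y0 k 1"
  have "card (tilings 1 k ?R) =
      (if ?V \<subseteq> ?R then card (tilings 1 k (?R - ?V)) else 0) +
      (if ?H \<subseteq> ?R then card (tilings 1 k (?R - ?H)) else 0)"
    using assms by (intro card_tilings_first_cell finite_profile_region first_cell_profile_region) simp_all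
  moreover have "?V \<subseteq> ?R \<longleftrightarrow> y0 + k \<le> m"
    using assms(1) by (intro vertical_bar_subset_profile_region) simp
  moreover have "?R - ?V = profile_region y0 (pre @ k # h) m"
    by (rule profile_region_minus_vertical_bar)
  moreover have "?H \<subseteq> ?R \<longleftrightarrow> take (k - 1) h = replicate (k - 1) 0"
    using assms(1,3) by (intro horizontal_bar_subset_profile_region) simp_all
  moreover have "?R - ?H = profile_region y0 (pre @ replicate k 1 @ drop (k - 1) h) m"
    if zeros: "take (k - 1) h = replicate (k - 1) 0"
  proof -
    obtain r where "h = replicate (k - 1) 0 @ r"
      using zeros by (metis append_take_drop_id)
    then have "pre @ 0 # h = pre @ replicate k 0 @ drop (k - 1) h"
      using assms(1) by (cases k) simp_all
    then show ?thesis
      using profile_region_minus_horizontal_bar by simp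
  qed
  ultimately show ?thesis
    by simp
qed

lemma card_tilings_fill_row:
  assumes "1 < k" "vert \<longleftrightarrow> y0 + k \<le> m" "0 \<notin> set pre" "y0 < m"
  shows "card (tilings 1 k (profile_region y0 (pre @ h) m)) =
    (\<Sum>h'\<leftarrow>fill_row k vert h. card (tilings 1 k (profile_region y0 (pre @ h') m)))"
  using assms
proof (induction k vert h arbitrary: pre rule: fill_row.induct)
  case (1 k vert)
  then show ?case by simp
next
  case (2 k vert v h)
  let ?N = "\<lambda>h. card (tilings 1 k (profile_region y0 h m))"
  show ?case
  proof (cases "v = 0")
    case False
    then show ?thesis
      using "2.IH"(1)[of "pre @ [v]"] "2.prems" by (simp add: comp_def)
  next
    case True
    have "?N (pre @ 0 # h) = (if vert then ?N ((pre @ [k]) @ h) else 0) +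
        (if take (k - 1) h = replicate (k - 1) 0
         then ?N ((pre @ replicate k 1) @ drop (k - 1) h) else 0)"
      using card_tilings_profile_region_step[of k pre y0 m h] "2.prems" by simp
    then show ?thesis
      using "2.IH"(2)[of "pre @ [k]"] "2.IH"(3)[of "pre @ replicate k 1"] True "2.prems"
      by (simp add: comp_def)
  qed
qed

fun profile_count :: "nat \<Rightarrow> nat \<Rightarrow> nat list \<Rightarrow> nat" where
  "profile_count k 0 h = 1"
| "profile_count k (Suc n) h =
    (\<Sum>h'\<leftarrow>fill_row k (k \<le> Suc n) h. profile_count k n (map (\<lambda>v. v - 1) h'))"

lemma profile_region_lower:
  assumes "0 \<notin> set h"
  shows "profile_region y0 h m = profile_region (Suc y0) (map (\<lambda>v. v - 1) h) m"
proof -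
  have "0 < h ! x" if "x < length h" for x
    using assms nth_mem[OF that] by (cases "h ! x") auto
  then have "(x, y) \<in> profile_region y0 h m \<longleftrightarrow>
      (x, y) \<in> profile_region (Suc y0) (map (\<lambda>v. v - 1) h) m" for x y
    by (cases "x < length h") fastforce+
  then show ?thesis
    by (simp add: set_eq_iff split_paired_all)
qed

lemma card_tilings_profile_region:
  assumes "1 < k"
  shows "card (tilings 1 k (profile_region y0 h (y0 + n))) = profile_count k n h"
proof (induction n arbitrary: y0 h)
  case 0
  have "profile_region y0 h y0 = {}"
    by auto
  then show ?case
    using assms by (simp add: tilings_empty)
next
  case (Suc n)
  have "card (tilings 1 k (profile_region y0 ([] @ h) (y0 + Suc n))) =
      (\<Sum>h'\<leftarrow>fill_row k (k \<le> Suc n) h. card (tilings 1 k (profile_region y0 ([] @ h') (y0 + Suc n))))"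
    using assms by (intro card_tilings_fill_row) auto
  also have "\<dots> = (\<Sum>h'\<leftarrow>fill_row k (k \<le> Suc n) h. profile_count k n (map (\<lambda>v. v - 1) h'))"
  proof (intro arg_cong[where f = sum_list] map_cong refl)
    fix h' assume "h' \<in> set (fill_row k (k \<le> Suc n) h)"
    then have "0 \<notin> set h'"
      using assms fill_row_nonzero[of k] by simp
    then have "profile_region y0 h' (y0 + Suc n) =
        profile_region (Suc y0) (map (\<lambda>v. v - 1) h') (Suc y0 + n)"
      by (simp add: profile_region_lower)
    then show "card (tilings 1 k (profile_region y0 ([] @ h') (y0 + Suc n))) =
        profile_count k n (map (\<lambda>v. v - 1) h')"
      using Suc.IH[of "Suc y0"] by simp
  qed
  finally show ?case
    by simp
qed

lemma card_tilings_rect_bars: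
  "1 < k \<Longrightarrow> card (tilings 1 k ({0..<w} \<times> {0..<n})) = profile_count k n (replicate w 0)"
  using card_tilings_profile_region[of k 0] by (simp add: rect_eq_profile_region)

section \<open>Linear recurrences and generating functions\<close>

lemma sum_mult_sum_list_swap:
  fixes c :: "'k \<Rightarrow> 'a::comm_semiring_0"
  shows "(\<Sum>k\<in>K. c k * (\<Sum>j\<leftarrow>xs. g k j)) = (\<Sum>j\<leftarrow>xs. \<Sum>k\<in>K. c k * g k j)"
  by (induction xs) (simp_all add: sum.distrib distrib_left)

lemma transfer_preserves_recurrence:
  fixes F :: "nat \<Rightarrow> 'i \<Rightarrow> 'a::comm_ring"
  assumes step: "\<And>n i. n0 \<le> n \<Longrightarrow> i \<in> I \<Longrightarrow> F (Suc n) i = (\<Sum>j\<leftarrow>succ i. F n j)"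
    and closed: "\<And>i. i \<in> I \<Longrightarrow> set (succ i) \<subseteq> I"
    and init: "\<And>i. i \<in> I \<Longrightarrow> (\<Sum>k\<le>d. c k * F (n0 + d - k) i) = 0"
    and "n0 \<le> n" "i \<in> I"
  shows "(\<Sum>k\<le>d. c k * F (n + d - k) i) = 0"
  using \<open>n0 \<le> n\<close> \<open>i \<in> I\<close>
proof (induction n arbitrary: i rule: nat_induct_at_least)
  case base
  then show ?case by (rule init)
next
  case (Suc n)
  have "(\<Sum>k\<le>d. c k * F (Suc n + d - k) i) = (\<Sum>k\<le>d. c k * (\<Sum>j\<leftarrow>succ i. F (n + d - k) j))"
    using Suc.hyps Suc.prems by (intro sum.cong refl) (simp add: Suc_diff_le step)
  also have "\<dots> = (\<Sum>j\<leftarrow>succ i. \<Sum>k\<le>d. c k * F (n + d - k) j)"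
    by (rule sum_mult_sum_list_swap)
  also have "\<dots> = 0"
    using Suc.IH closed[OF Suc.prems] by (simp add: subset_iff cong: map_cong)
  finally show ?case .
qed

lemma fps_mult_eq_of_recurrence:
  fixes a c :: "nat \<Rightarrow> 'a::comm_ring_1"
  assumes "\<And>k. d < k \<Longrightarrow> c k = 0" "d \<le> N"
    and "\<And>n. N \<le> n \<Longrightarrow> (\<Sum>k\<le>d. c k * a (n - k)) = 0"
  shows "Abs_fps a * Abs_fps c = Abs_fps (\<lambda>n. if n < N then \<Sum>k\<le>n. c k * a (n - k) else 0)"
proof (rule fps_ext)
  fix n
  have "(Abs_fps a * Abs_fps c) $ n = (\<Sum>k\<le>n. c k * a (n - k))"
    by (subst mult.commute) (simp add: fps_mult_nth atMost_atLeast0)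
  moreover have "(\<Sum>k\<le>n. c k * a (n - k)) = (\<Sum>k\<le>d. c k * a (n - k))" if "N \<le> n"
    using assms(1,2) that by (intro sum.mono_neutral_right) auto
  ultimately show "(Abs_fps a * Abs_fps c) $ n =
      Abs_fps (\<lambda>n. if n < N then \<Sum>k\<le>n. c k * a (n - k) else 0) $ n"
    using assms(3) by simp
qed

lemma fps_compose_fps_X_power_nth:
  fixes f :: "'a::comm_ring_1 fps"
  assumes "0 < k"
  shows "(f oo fps_X ^ k) $ n = (if k dvd n then f $ (n div k) else 0)"
proof -
  have "(f oo fps_X ^ k) $ n = (\<Sum>i=0..n. if i = n div k \<and> k dvd n then f $ i else 0)"
    unfolding fps_compose_nth power_mult[symmetric] fps_X_power_nth
    using assms by (intro sum.cong refl) auto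
  then show ?thesis
    by simp
qed

section \<open>The strip of width 8\<close>

lemma replicate_numeral: "replicate (numeral n) x = x # replicate (pred_numeral n) x"
  by (simp add: numeral_eq_Suc)

lemma profile_count_numeral:
  "profile_count k (numeral n) h =
    (\<Sum>h'\<leftarrow>fill_row k (k \<le> numeral n) h. profile_count k (pred_numeral n) (map (\<lambda>v. v - 1) h'))"
  by (simp add: numeral_eq_Suc)

lemma profile_count_1: "profile_count k 1 h = length (fill_row k (k \<le> 1) h)"
  by (simp add: sum_list_triv)

text \<open>The profiles of the \<open>8 \<times> n\<close> strip reachable from the flat one, lowered by one row
  after each filling, so that all entries are at most \<open>3\<close>.\<close>
definition strip_profiles :: "nat list list" where
  "strip_profiles =
    [[0, 0, 0, 0, 0, 0, 0, 0], [3, 3, 3, 3, 3, 3, 3, 3], [3, 3, 3, 3, 0, 0, 0, 0],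
     [3, 3, 3, 0, 0, 0, 0, 3], [3, 3, 0, 0, 0, 0, 3, 3], [3, 0, 0, 0, 0, 3, 3, 3],
     [0, 0, 0, 0, 3, 3, 3, 3], [2, 2, 2, 2, 2, 2, 2, 2], [2, 2, 2, 2, 3, 3, 3, 3],
     [2, 2, 2, 2, 0, 0, 0, 0], [2, 2, 2, 3, 3, 3, 3, 2], [2, 2, 2, 0, 0, 0, 0, 2],
     [2, 2, 3, 3, 3, 3, 2, 2], [2, 2, 0, 0, 0, 0, 2, 2], [2, 3, 3, 3, 3, 2, 2, 2],
     [2, 0, 0, 0, 0, 2, 2, 2], [3, 3, 3, 3, 2, 2, 2, 2], [0, 0, 0, 0, 2, 2, 2, 2],
     [1, 1, 1, 1, 1, 1, 1, 1], [1, 1, 1, 1, 2, 2, 2, 2], [1, 1, 1, 1, 3, 3, 3, 3],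
     [1, 1, 1, 1, 0, 0, 0, 0], [1, 1, 1, 2, 2, 2, 2, 1], [1, 1, 1, 3, 3, 3, 3, 1],
     [1, 1, 1, 0, 0, 0, 0, 1], [1, 1, 2, 2, 2, 2, 1, 1], [1, 1, 3, 3, 3, 3, 1, 1],
     [1, 1, 0, 0, 0, 0, 1, 1], [1, 2, 2, 2, 2, 1, 1, 1], [1, 3, 3, 3, 3, 1, 1, 1],
     [1, 0, 0, 0, 0, 1, 1, 1], [2, 2, 2, 2, 1, 1, 1, 1], [3, 3, 3, 3, 1, 1, 1, 1],
     [0, 0, 0, 0, 1, 1, 1, 1], [0, 0, 0, 1, 1, 1, 1, 0], [0, 0, 0, 2, 2, 2, 2, 0],
     [0, 0, 0, 3, 3, 3, 3, 0], [0, 0, 1, 1, 1, 1, 0, 0], [0, 0, 2, 2, 2, 2, 0, 0],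
     [0, 0, 3, 3, 3, 3, 0, 0], [0, 1, 1, 1, 1, 0, 0, 0], [0, 2, 2, 2, 2, 0, 0, 0],
     [0, 3, 3, 3, 3, 0, 0, 0], [3, 3, 3, 1, 1, 1, 1, 3], [3, 3, 3, 2, 2, 2, 2, 3],
     [3, 3, 1, 1, 1, 1, 3, 3], [3, 3, 2, 2, 2, 2, 3, 3], [3, 1, 1, 1, 1, 3, 3, 3],
     [3, 2, 2, 2, 2, 3, 3, 3], [2, 2, 2, 1, 1, 1, 1, 2], [2, 2, 1, 1, 1, 1, 2, 2],
     [2, 1, 1, 1, 1, 2, 2, 2]]"

definition strip_successors :: "nat list list" where
  "strip_successors =
    [[1, 2, 3, 4, 5, 6, 0], [7], [8, 9], [10, 11], [12, 13], [14, 15], [16, 17], [18], [19],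
     [20, 21], [22], [23, 24], [25], [26, 27], [28], [29, 30], [31], [32, 33], [0], [33], [17],
     [6, 0], [34], [35], [36, 0], [37], [38], [39, 0], [40], [41], [42, 0], [21], [9], [2, 0],
     [3], [43], [44], [4], [45], [46], [5], [47], [48], [11], [49], [13], [50], [15], [51],
     [24], [27], [30]]"

text \<open>Row \<open>j\<close> lists \<open>profile_count 4 (3 + j)\<close> over \<open>strip_profiles\<close>.  From three rows to
  go on, vertical bars always fit, so one step of the recursion is the fixed transfer given by
  \<open>strip_successors\<close>; the table is a certificate checked against that transfer.\<close>
definition strip_count_table :: "nat list list" where
  "strip_count_table =
    [[1, 1, 1, 1, 1, 1, 1, 1, 1, 1, 0, 1, 0, 1, 0, 1, 1, 1, 1, 1, 1, 1, 0, 0, 1, 0, 0, 1, 0, 0,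
      1, 1, 1, 1, 0, 0, 0, 0, 0, 0, 0, 0, 0, 1, 1, 1, 1, 1, 1, 1, 1, 1],
     [7, 1, 2, 1, 1, 1, 2, 1, 1, 2, 0, 1, 0, 1, 0, 1, 1, 2, 1, 1, 1, 2, 0, 0, 1, 0, 0, 1, 0, 0,
      1, 1, 1, 2, 1, 1, 1, 1, 1, 1, 1, 1, 1, 1, 1, 1, 1, 1, 1, 1, 1, 1],
     [15, 1, 3, 1, 1, 1, 3, 1, 1, 3, 0, 1, 0, 1, 0, 1, 1, 3, 7, 2, 2, 9, 1, 1, 8, 1, 1, 8, 1, 1,
      8, 2, 2, 9, 1, 1, 1, 1, 1, 1, 1, 1, 1, 1, 1, 1, 1, 1, 1, 1, 1, 1],
     [25, 1, 4, 1, 1, 1, 4, 7, 2, 11, 1, 9, 1, 9, 1, 9, 2, 11, 15, 9, 3, 18, 1, 1, 16, 1, 1, 16,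
      1, 1, 16, 9, 3, 18, 1, 1, 1, 1, 1, 1, 1, 1, 1, 1, 1, 1, 1, 1, 1, 8, 8, 8],
     [37, 7, 13, 10, 10, 10, 13, 15, 9, 21, 1, 17, 1, 17, 1, 17, 9, 21, 25, 18, 11, 29, 1, 1,
      26, 1, 1, 26, 1, 1, 26, 18, 11, 29, 1, 1, 1, 1, 1, 1, 1, 1, 1, 9, 8, 9, 8, 9, 8, 16, 16,
      16],
     [100, 15, 30, 18, 18, 18, 30, 25, 18, 40, 1, 27, 1, 27, 1, 27, 18, 40, 37, 29, 21, 50, 1,
      1, 38, 1, 1, 38, 1, 1, 38, 29, 21, 50, 10, 9, 8, 10, 9, 8, 10, 9, 8, 17, 16, 17, 16, 17,
      16, 26, 26, 26],
     [229, 25, 58, 28, 28, 28, 58, 37, 29, 71, 1, 39, 1, 39, 1, 39, 29, 71, 100, 50, 40, 130,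
      10, 9, 108, 10, 9, 108, 10, 9, 108, 50, 40, 130, 18, 17, 16, 18, 17, 16, 18, 17, 16, 27,
      26, 27, 26, 27, 26, 38, 38, 38],
     [454, 37, 100, 40, 40, 40, 100, 100, 50, 170, 10, 117, 10, 117, 10, 117, 50, 170, 229, 130,
      71, 287, 18, 17, 245, 18, 17, 245, 18, 17, 245, 130, 71, 287, 28, 27, 26, 28, 27, 26, 28,
      27, 26, 39, 38, 39, 38, 39, 38, 108, 108, 108],
     [811, 100, 220, 127, 127, 127, 220, 229, 130, 358, 18, 262, 18, 262, 18, 262, 130, 358,
      454, 287, 170, 554, 28, 27, 480, 28, 27, 480, 28, 27, 480, 287, 170, 554, 40, 39, 38, 40,
      39, 38, 40, 39, 38, 117, 108, 117, 108, 117, 108, 245, 245, 245],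
     [1732, 229, 488, 280, 280, 280, 488, 454, 287, 724, 28, 507, 28, 507, 28, 507, 287, 724,
      811, 554, 358, 1031, 40, 39, 849, 40, 39, 849, 40, 39, 849, 554, 358, 1031, 127, 117, 108,
      127, 117, 108, 127, 117, 108, 262, 245, 262, 245, 262, 245, 480, 480, 480],
     [3777, 454, 1011, 535, 535, 535, 1011, 811, 554, 1389, 40, 888, 40, 888, 40, 888, 554,
      1389, 1732, 1031, 724, 2220, 127, 117, 1840, 127, 117, 1840, 127, 117, 1840, 1031, 724,
      2220, 280, 262, 245, 280, 262, 245, 280, 262, 245, 507, 480, 507, 480, 507, 480, 849, 849,
      849],
     [7858, 811, 1943, 928, 928, 928, 1943, 1732, 1031, 2944, 127, 1957, 127, 1957, 127, 1957,
      1031, 2944, 3777, 2220, 1389, 4788, 280, 262, 4022, 280, 262, 4022, 280, 262, 4022, 2220,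
      1389, 4788, 535, 507, 480, 535, 507, 480, 535, 507, 480, 888, 849, 888, 849, 888, 849,
      1840, 1840, 1840],
     [15339, 1732, 3975, 2084, 2084, 2084, 3975, 3777, 2220, 6177, 280, 4284, 280, 4284, 280,
      4284, 2220, 6177, 7858, 4788, 2944, 9801, 535, 507, 8338, 535, 507, 8338, 535, 507, 8338,
      4788, 2944, 9801, 928, 888, 849, 928, 888, 849, 928, 888, 849, 1957, 1840, 1957, 1840,
      1957, 1840, 4022, 4022, 4022],
     [31273, 3777, 8397, 4564, 4564, 4564, 8397, 7858, 4788, 12745, 535, 8845, 535, 8845, 535,
      8845, 4788, 12745, 15339, 9801, 6177, 19314, 928, 888, 16188, 928, 888, 16188, 928, 888,
      16188, 9801, 6177, 19314, 2084, 1957, 1840, 2084, 1957, 1840, 2084, 1957, 1840, 4284,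
      4022, 4284, 4022, 4284, 4022, 8338, 8338, 8338],
     [65536, 7858, 17533, 9380, 9380, 9380, 17533, 15339, 9801, 25491, 928, 17076, 928, 17076,
      928, 17076, 9801, 25491, 31273, 19314, 12745, 39670, 2084, 1957, 33113, 2084, 1957, 33113,
      2084, 1957, 33113, 19314, 12745, 39670, 4564, 4284, 4022, 4564, 4284, 4022, 4564, 4284,
      4022, 8845, 8338, 8845, 8338, 8845, 8338, 16188, 16188, 16188],
     [136600, 15339, 35292, 18004, 18004, 18004, 35292, 31273, 19314, 52415, 2084, 35070, 2084,
      35070, 2084, 35070, 19314, 52415, 65536, 39670, 25491, 83069, 4564, 4284, 69558, 4564,
      4284, 69558, 4564, 4284, 69558, 39670, 25491, 83069, 9380, 8845, 8338, 9380, 8845, 8338,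
      9380, 8845, 8338, 17076, 16188, 17076, 16188, 17076, 16188, 33113, 33113, 33113],
     [276535, 31273, 71729, 37154, 37154, 37154, 71729, 65536, 39670, 108560, 4564, 73842, 4564,
      73842, 4564, 73842, 39670, 108560, 136600, 83069, 52415, 171892, 9380, 8845, 144938, 9380,
      8845, 144938, 9380, 8845, 144938, 83069, 52415, 171892, 18004, 17076, 16188, 18004, 17076,
      16188, 18004, 17076, 16188, 35070, 33113, 35070, 33113, 35070, 33113, 69558, 69558, 69558],
     [562728, 65536, 148230, 78406, 78406, 78406, 148230, 136600, 83069, 224307, 9380, 153783,
      9380, 153783, 9380, 153783, 83069, 224307, 276535, 171892, 108560, 348264, 18004, 17076,
      292723, 18004, 17076, 292723, 18004, 17076, 292723, 171892, 108560, 348264, 37154, 35070,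
      33113, 37154, 35070, 33113, 37154, 35070, 33113, 73842, 69558, 73842, 69558, 73842, 69558,
      144938, 144938, 144938],
     [1159942, 136600, 307376, 163163, 163163, 163163, 307376, 276535, 171892, 456824, 18004,
      309799, 18004, 309799, 18004, 309799, 171892, 456824, 562728, 348264, 224307, 710958,
      37154, 35070, 595841, 37154, 35070, 595841, 37154, 35070, 595841, 348264, 224307, 710958,
      78406, 73842, 69558, 78406, 73842, 69558, 78406, 73842, 69558, 153783, 144938, 153783,
      144938, 153783, 144938, 292723, 292723, 292723],
     [2400783, 276535, 628716, 327803, 327803, 327803, 628716, 562728, 348264, 935265, 37154,
      630911, 37154, 630911, 37154, 630911, 348264, 935265, 1159942, 710958, 456824, 1467318,
      78406, 73842, 1229500, 78406, 73842, 1229500, 78406, 73842, 1229500, 710958, 456824,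
      1467318, 163163, 153783, 144938, 163163, 153783, 144938, 163163, 153783, 144938, 309799,
      292723, 309799, 292723, 309799, 292723, 595841, 595841, 595841],
     [4918159, 562728, 1283529, 668065, 668065, 668065, 1283529, 1159942, 710958, 1924142,
      78406, 1303342, 78406, 1303342, 78406, 1303342, 710958, 1924142, 2400783, 1467318, 935265,
      3029499, 163163, 153783, 2545721, 163163, 153783, 2545721, 163163, 153783, 2545721,
      1467318, 935265, 3029499, 327803, 309799, 292723, 327803, 309799, 292723, 327803, 309799,
      292723, 630911, 595841, 630911, 595841, 630911, 595841, 1229500, 1229500, 1229500],
     [10052140, 1159942, 2635100, 1381748, 1381748, 1381748, 2635100, 2400783, 1467318, 3964764,
      163163, 2699504, 163163, 2699504, 163163, 2699504, 1467318, 3964764, 4918159, 3029499,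
      1924142, 6201688, 327803, 309799, 5210882, 327803, 309799, 5210882, 327803, 309799,
      5210882, 3029499, 1924142, 6201688, 668065, 630911, 595841, 668065, 630911, 595841,
      668065, 630911, 595841, 1303342, 1229500, 1303342, 1229500, 1303342, 1229500, 2545721,
      2545721, 2545721],
     [20627526, 2400783, 5432082, 2862667, 2862667, 2862667, 5432082, 4918159, 3029499, 8125830,
      327803, 5520681, 327803, 5520681, 327803, 5520681, 3029499, 8125830, 10052140, 6201688,
      3964764, 12687240, 668065, 630911, 10647981, 668065, 630911, 10647981, 668065, 630911,
      10647981, 6201688, 3964764, 12687240, 1381748, 1303342, 1229500, 1381748, 1303342,
      1229500, 1381748, 1303342, 1229500, 2699504, 2545721, 2699504, 2545721, 2699504, 2545721,
      5210882, 5210882, 5210882]]"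

definition strip_denominator :: "int list" where
  "strip_denominator =
    [1, -1, -1, 0, -9, 2, 8, 5, 16, 0, -13, -6, -13, -2, 10, 6, 6, 1, -5, -2, -1, 0, 1]"

definition strip_numerator :: "int list" where
  "strip_numerator = [1, 0, -1, -1, -4, 0, 4, 3, 6, 0, -6, -3, -4, 0, 4, 1, 1, 0, -1]"

lemma strip_lengths:
  "length strip_profiles = 52" "length strip_successors = 52" "length strip_count_table = 23"
  "\<forall>v\<in>set strip_count_table. length v = 52"
  by (simp_all add: strip_profiles_def strip_successors_def strip_count_table_def)

lemma strip_successors_less: "\<forall>l\<in>set strip_successors. \<forall>j\<in>set l. j < 52"
  by (simp add: strip_successors_def)

lemma strip_profiles_0: "strip_profiles ! 0 = replicate 8 0"
  by (simp add: strip_profiles_def replicate_numeral)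

lemma strip_successors_fill_row:
  "map (\<lambda>h. map (map (\<lambda>v. v - 1)) (fill_row 4 True h)) strip_profiles =
    map (map ((!) strip_profiles)) strip_successors"
  unfolding strip_profiles_def strip_successors_def by (simp add: replicate_numeral)

lemma profile_count_strip_step:
  assumes "3 \<le> n" "i < 52"
  shows "profile_count 4 (Suc n) (strip_profiles ! i) =
    (\<Sum>j\<leftarrow>strip_successors ! i. profile_count 4 n (strip_profiles ! j))"
proof -
  have "map (map (\<lambda>v. v - 1)) (fill_row 4 True (strip_profiles ! i)) =
      map ((!) strip_profiles) (strip_successors ! i)"
    using arg_cong[OF strip_successors_fill_row, of "\<lambda>xs. xs ! i"] assms(2) strip_lengths by simp
  from arg_cong[OF this, of "\<lambda>hs. \<Sum>h\<leftarrow>hs. profile_count 4 n h"] show ?thesis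
    using assms(1) by (simp add: comp_def)
qed

lemma strip_count_table_0: "strip_count_table ! 0 = map (profile_count 4 3) strip_profiles"
  unfolding strip_profiles_def strip_count_table_def
  by (simp add: profile_count_numeral profile_count_1 replicate_numeral)

lemma strip_count_table_step:
  "map (\<lambda>v. map (\<lambda>l. \<Sum>j\<leftarrow>l. v ! j) strip_successors) (butlast strip_count_table) =
    tl strip_count_table"
  unfolding strip_successors_def strip_count_table_def by simp

lemma strip_count_table_eq:
  "j < 23 \<Longrightarrow> i < 52 \<Longrightarrow> strip_count_table ! j ! i = profile_count 4 (3 + j) (strip_profiles ! i)"
proof (induction j arbitrary: i)
  case 0
  then show ?case
    using strip_count_table_0 strip_lengths by simp
next
  case (Suc j)
  have "strip_count_table ! Suc j = map (\<lambda>l. \<Sum>j'\<leftarrow>l. strip_count_table ! j ! j') strip_successors"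
    using arg_cong[OF strip_count_table_step, of "\<lambda>xs. xs ! j"] Suc.prems strip_lengths
    by (simp add: nth_tl nth_butlast)
  then have "strip_count_table ! Suc j ! i =
      (\<Sum>j'\<leftarrow>strip_successors ! i. profile_count 4 (3 + j) (strip_profiles ! j'))"
    using Suc strip_lengths strip_successors_less nth_mem[of i strip_successors]
    by (simp cong: map_cong)
  also have "\<dots> = profile_count 4 (3 + Suc j) (strip_profiles ! i)"
    using profile_count_strip_step[of "3 + j" i] Suc.prems by simp
  finally show ?case .
qed

lemma strip_count_table_recurrence:
  "map (\<lambda>i. \<Sum>k\<le>22. strip_denominator ! k * int (strip_count_table ! (22 - k) ! i)) [0..<52] =
    replicate 52 0"
  unfolding strip_denominator_def strip_count_table_def
  by (simp add: replicate_numeral upt_rec atMost_nat_numeral)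

lemma profile_count_strip_recurrence:
  assumes "25 \<le> n"
  shows "(\<Sum>k\<le>22. strip_denominator ! k * int (profile_count 4 (n - k) (replicate 8 0))) = 0"
proof -
  let ?F = "\<lambda>m i. int (profile_count 4 m (strip_profiles ! i))"
  have "(\<Sum>k\<le>22. strip_denominator ! k * ?F (n - 22 + 22 - k) 0) = 0"
  proof (rule transfer_preserves_recurrence[where I = "{..<52}" and succ = "(!) strip_successors"])
    show "?F (Suc m) i = (\<Sum>j\<leftarrow>strip_successors ! i. ?F m j)" if "3 \<le> m" "i \<in> {..<52}" for m i
      using profile_count_strip_step[of m i] that by (simp add: sum_list_of_nat[symmetric] comp_def)
    show "set (strip_successors ! i) \<subseteq> {..<52}" if "i \<in> {..<52}" for i
      using strip_successors_less strip_lengths that by auto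
    show "(\<Sum>k\<le>22. strip_denominator ! k * ?F (3 + 22 - k) i) = 0" if "i \<in> {..<52}" for i
    proof -
      have "(\<Sum>k\<le>22. strip_denominator ! k * ?F (3 + 22 - k) i) =
          (\<Sum>k\<le>22. strip_denominator ! k * int (strip_count_table ! (22 - k) ! i))"
        using that by (intro sum.cong refl) (simp add: strip_count_table_eq)
      then show ?thesis
        using arg_cong[OF strip_count_table_recurrence, of "\<lambda>xs. xs ! i"] that by simp
    qed
  qed (use assms in auto)
  then show ?thesis
    using assms strip_profiles_0 by (simp add: Nat.add_diff_assoc2)
qed

lemma profile_count_strip_initial:
  assumes "m < 26"
  shows "profile_count 4 m (replicate 8 0) = ([1, 1, 1] @ map hd strip_count_table) ! m"
proof -
  consider "m = 0" | "m = 1" | "m = 2" | "3 \<le> m"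
    by linarith
  then show ?thesis
  proof cases
    case 4
    then have "strip_count_table ! (m - 3) \<noteq> []"
      using assms strip_lengths nth_mem[of "m - 3" strip_count_table] by fastforce
    then have "([1, 1, 1] @ map hd strip_count_table) ! m = strip_count_table ! (m - 3) ! 0"
      using 4 assms strip_lengths by (simp add: nth_append hd_conv_nth numeral_3_eq_3)
    then show ?thesis
      using 4 assms strip_count_table_eq[of "m - 3" 0] strip_profiles_0 by simp
  qed (simp_all add: profile_count_numeral profile_count_1 replicate_numeral)
qed

lemma strip_initial_terms:
  "map (\<lambda>n. \<Sum>k\<le>n. nth_default 0 strip_denominator k *
      int (([1, 1, 1] @ map hd strip_count_table) ! (n - k))) [0..<25] =
    map (nth_default 0 strip_numerator) [0..<25]"
  unfolding strip_denominator_def strip_numerator_def strip_count_table_def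
  by (simp add: upt_rec atMost_nat_numeral nth_default_def)

lemma strip_counts_initial_convolution:
  assumes "n < 25"
  shows "(\<Sum>k\<le>n. nth_default 0 strip_denominator k * int (profile_count 4 (n - k) (replicate 8 0))) =
    nth_default 0 strip_numerator n"
proof -
  have "(\<Sum>k\<le>n. nth_default 0 strip_denominator k * int (profile_count 4 (n - k) (replicate 8 0))) =
      (\<Sum>k\<le>n. nth_default 0 strip_denominator k * int (([1, 1, 1] @ map hd strip_count_table) ! (n - k)))"
    using assms by (intro sum.cong refl) (simp add: profile_count_strip_initial)
  then show ?thesis
    using assms arg_cong[OF strip_initial_terms, of "\<lambda>xs. xs ! n"] by simp
qed

lemma strip_generating_function:
  "Abs_fps (\<lambda>n. of_nat (profile_count 4 n (replicate 8 0))) *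
    fps_of_poly (Poly (map of_int strip_denominator)) =
    (fps_of_poly (Poly (map of_int strip_numerator)) :: rat fps)"
proof -
  let ?a = "\<lambda>n. of_nat (profile_count 4 n (replicate 8 0)) :: rat"
  let ?c = "\<lambda>k. of_int (nth_default 0 strip_denominator k) :: rat"
  have lengths: "length strip_denominator = 23" "length strip_numerator = 19"
    by (simp_all add: strip_denominator_def strip_numerator_def)
  have "fps_of_poly (Poly (map of_int strip_denominator)) = Abs_fps ?c"
    by (rule fps_ext) (simp add: nth_default_map_eq)
  moreover have "Abs_fps ?a * Abs_fps ?c = Abs_fps (\<lambda>n. if n < 25 then \<Sum>k\<le>n. ?c k * ?a (n - k) else 0)"
  proof (rule fps_mult_eq_of_recurrence[where d = 22])
    show "?c k = 0" if "22 < k" for k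
      using that lengths by (simp add: nth_default_beyond)
    show "(\<Sum>k\<le>22. ?c k * ?a (n - k)) = 0" if "25 \<le> n" for n
      using arg_cong[OF profile_count_strip_recurrence[OF that], of "of_int :: int \<Rightarrow> rat"] lengths
      by (simp add: nth_default_nth)
  qed simp
  moreover have "Abs_fps (\<lambda>n. if n < 25 then \<Sum>k\<le>n. ?c k * ?a (n - k) else 0) =
      fps_of_poly (Poly (map of_int strip_numerator))"
  proof (rule fps_ext)
    fix n
    show "Abs_fps (\<lambda>n. if n < 25 then \<Sum>k\<le>n. ?c k * ?a (n - k) else 0) $ n =
        fps_of_poly (Poly (map of_int strip_numerator)) $ n"
      using arg_cong[OF strip_counts_initial_convolution[of n], of "of_int :: int \<Rightarrow> rat"] lengths
      by (cases "n < 25") (simp_all add: nth_default_map_eq nth_default_beyond)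
  qed
  ultimately show ?thesis
    by simp
qed

lemma strip_denominator_fps:
  "fps_of_poly (Poly (map of_int strip_denominator)) =
    (1 - fps_X - fps_X^2 - 9*fps_X^4 + 2*fps_X^5 + 8*fps_X^6 + 5*fps_X^7 + 16*fps_X^8 - 13*fps_X^10
      - 6*fps_X^11 - 13*fps_X^12 - 2*fps_X^13 + 10*fps_X^14 + 6*fps_X^15 + 6*fps_X^16 + fps_X^17
      - 5*fps_X^18 - 2*fps_X^19 - fps_X^20 + fps_X^22 :: rat fps)"
  unfolding strip_denominator_def
  by (simp only: list.map Poly.simps fps_of_poly_pCons fps_of_poly_0 of_int_0 of_int_1 of_int_numeral
      of_int_minus fps_const_neg[symmetric] fps_numeral_fps_const[symmetric] fps_const_0_eq_0
      fps_const_1_eq_1) algebra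

lemma strip_numerator_fps:
  "fps_of_poly (Poly (map of_int strip_numerator)) =
    ((1 - fps_X)^3 * (1 + fps_X)^3 * (1 + fps_X^2)^3 * (1 - fps_X^2 - fps_X^3 - fps_X^4 + fps_X^6) :: rat fps)"
  unfolding strip_numerator_def
  by (simp only: list.map Poly.simps fps_of_poly_pCons fps_of_poly_0 of_int_0 of_int_1 of_int_numeral
      of_int_minus fps_const_neg[symmetric] fps_numeral_fps_const[symmetric] fps_const_0_eq_0
      fps_const_1_eq_1) algebra

lemma T14_8_eq: "T14_8 N = (if even N then profile_count 4 (N div 2) (replicate 8 0) else 0)"
proof (cases "even N")
  case True
  let ?R = "{0..<8} \<times> {0..<N div 2}"
  have "card T = N" if "T \<in> tilings 1 4 ?R" for T
    using card_tiled_region[OF that] True by simp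
  then have "{T. is_tiling 1 4 8 (N div 2) T \<and> card T = N} = tilings 1 4 ?R"
    by (auto simp: is_tiling_iff_tilings)
  then show ?thesis
    using True card_tilings_rect_bars[of 4 8 "N div 2"] by (simp add: T14_8_def)
qed (simp add: T14_8_def)

theorem mainTheorem7:
  fixes X :: "rat fps"
  defines "X \<equiv> fps_X"
  shows "Abs_fps (\<lambda>N. of_nat (T14_8 N)) =
    ((1 - X^2)^3 * (1 + X^2)^3 * (1 + X^4)^3 * (1 - X^4 - X^6 - X^8 + X^12)) /
    (1 - X^2 - X^4 - 9*X^8 + 2*X^10 + 8*X^12 + 5*X^14 + 16*X^16 - 13*X^20 - 6*X^22
       - 13*X^24 - 2*X^26 + 10*X^28 + 6*X^30 + 6*X^32 + X^34 - 5*X^36 - 2*X^38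
       - X^40 + X^44)"
    (is "?A = ?P / ?Q")
proof -
  let ?B = "Abs_fps (\<lambda>n. of_nat (profile_count 4 n (replicate 8 0))) :: rat fps"
  have "?A = ?B oo X^2"
    by (rule fps_ext) (simp add: X_def fps_compose_fps_X_power_nth T14_8_eq)
  moreover have "?Q = fps_of_poly (Poly (map of_int strip_denominator)) oo X^2"
    and "?P = fps_of_poly (Poly (map of_int strip_numerator)) oo X^2"
    unfolding strip_denominator_fps strip_numerator_fps X_def
    by (simp_all add: fps_compose_add_distrib fps_compose_sub_distrib fps_compose_mult_distrib
        fps_compose_power[symmetric] power_mult[symmetric])
  ultimately have "?A * ?Q = ?P"
    using strip_generating_function by (simp add: fps_compose_mult_distrib[symmetric] X_def)
  moreover have "?Q \<noteq> 0"
    using fps_nonzeroI[of ?Q 0] by (simp add: X_def)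
  ultimately show ?thesis
    by (metis nonzero_mult_div_cancel_right)
qed

end
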